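(* Let $G^0,G^1,G^2$ be finite-dimensional complex vector spaces with $\dim G^0>\dim G^1\ge 1$. For a subspace $E\subset\mathrm{Hom}(G^0,G^1)$, define $$\phi_E:E\times\mathrm{Hom}(G^1,G^2)\to\mathrm{Hom}(G^0,G^2),\qquad(\alpha,\beta)\mapsto\beta\circ\alpha.$$ (i) If $\dim G^1=1$, then for every integer $k$ with $2\le k\le\dim\mathrm{Hom}(G^0,G^1)$ and every $E$ in a nonempty Zariski open subset of $G(k,\mathrm{Hom}(G^0,G^1))$, we have $\mathrm{Symm}(\phi_E)=\{0\}$. (ii) If $\dim G^1>1$, then for every integer $k$ with $3\le k\le\dim\mathrm{Hom}(G^0,G^1)$ and every $E$ in a nonempty Zariski open subset of $G(k,\mathrm{Hom}(G^0,G^1))$, we have $\mathrm{Symm}(\phi_E)=\{0\}$.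
   Context: For a bilinear map $B:E\times F\to G$, define $$\mathrm{Symm}(B)=\{q\in\mathrm{Hom}(E,F): B(\alpha,q(\alpha'))=B(\alpha',q(\alpha))\ \forall\alpha,\alpha'\in E\}.$$ Thus $\mathrm{Symm}(\phi_E)$ is the set of $q\in\mathrm{Hom}(E,\mathrm{Hom}(G^1,G^2))$ with $q(\alpha')\circ\alpha=q(\alpha)\circ\alpha'$ for all $\alpha,\alpha'\in E$. *)

theory Defs
  imports "Jordan_Normal_Form.Determinant"
begin

text \<open>Model: G0 = C^n0, G1 = C^n1, G2 = C^n2 (fixed bases).
  Hom(G0,G1) = complex n1 x n0 matrices, composition = matrix product.\<close>

definition lincomb :: "nat \<Rightarrow> nat \<Rightarrow> nat \<Rightarrow> (nat \<Rightarrow> complex) \<Rightarrow> (nat \<Rightarrow> complex mat) \<Rightarrow> complex mat" where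
  "lincomb n1 n0 k c b = mat n1 n0 (\<lambda>(i,j). \<Sum>r<k. c r * b r $$ (i,j))"

definition span_mats :: "nat \<Rightarrow> nat \<Rightarrow> nat \<Rightarrow> (nat \<Rightarrow> complex mat) \<Rightarrow> complex mat set" where
  "span_mats n1 n0 k b = {lincomb n1 n0 k c b | c. True}"

definition is_basis :: "nat \<Rightarrow> nat \<Rightarrow> nat \<Rightarrow> (nat \<Rightarrow> complex mat) \<Rightarrow> complex mat set \<Rightarrow> bool" where
  "is_basis n1 n0 k b E \<longleftrightarrow>
     (\<forall>r<k. b r \<in> carrier_mat n1 n0) \<and>
     (\<forall>c. lincomb n1 n0 k c b = 0\<^sub>m n1 n0 \<longrightarrow> (\<forall>r<k. c r = 0)) \<and>
     E = span_mats n1 n0 k b"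

definition grassmannian :: "nat \<Rightarrow> nat \<Rightarrow> nat \<Rightarrow> complex mat set set" where
  "grassmannian k n1 n0 = {E. \<exists>b. is_basis n1 n0 k b E}"

text \<open>Plucker coordinates of (the span of) a basis b: the k x k minors of the
  k x (n1*n0) matrix whose rows are the flattened b r; indexed by k-subsets S of
  {0..<n1*n0} (value 0 at other indices).\<close>
definition plucker :: "nat \<Rightarrow> nat \<Rightarrow> nat \<Rightarrow> (nat \<Rightarrow> complex mat) \<Rightarrow> nat set \<Rightarrow> complex" where
  "plucker k n1 n0 b S =
     (if S \<subseteq> {..<n1*n0} \<and> card S = k then
        det (mat k k (\<lambda>(r,c). let p = sorted_list_of_set S ! c in b r $$ (p div n0, p mod n0)))
      else 0)"

inductive polyfun :: "(('v \<Rightarrow> complex) \<Rightarrow> complex) \<Rightarrow> bool" where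
  pconst: "polyfun (\<lambda>x. c)"
| pvar: "polyfun (\<lambda>x. x v)"
| padd: "polyfun f \<Longrightarrow> polyfun g \<Longrightarrow> polyfun (\<lambda>x. f x + g x)"
| pmult: "polyfun f \<Longrightarrow> polyfun g \<Longrightarrow> polyfun (\<lambda>x. f x * g x)"

definition homogeneous_poly :: "(('v \<Rightarrow> complex) \<Rightarrow> complex) \<Rightarrow> bool" where
  "homogeneous_poly f \<longleftrightarrow> polyfun f \<and> (\<exists>d::nat. \<forall>t x. f (\<lambda>v. t * x v) = t ^ d * f x)"

text \<open>Zariski open subsets of G(k, Hom(G0,G1)) via the Plucker embedding:
  complements of common zero loci of sets of homogeneous polynomials
  in the Plucker coordinates.\<close>
definition zariski_open_grass :: "nat \<Rightarrow> nat \<Rightarrow> nat \<Rightarrow> complex mat set set \<Rightarrow> bool" where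
  "zariski_open_grass k n1 n0 U \<longleftrightarrow>
     (\<exists>P :: ((nat set \<Rightarrow> complex) \<Rightarrow> complex) set.
        (\<forall>f\<in>P. homogeneous_poly f) \<and>
        U = {E \<in> grassmannian k n1 n0.
               \<exists>b f. is_basis n1 n0 k b E \<and> f \<in> P \<and> f (plucker k n1 n0 b) \<noteq> 0})"

text \<open>q \<in> Hom(E, Hom(G1,G2)): a linear map on the subspace E (values off E irrelevant).\<close>
definition hom_on :: "complex mat set \<Rightarrow> nat \<Rightarrow> nat \<Rightarrow> (complex mat \<Rightarrow> complex mat) \<Rightarrow> bool" where
  "hom_on E n2 n1 q \<longleftrightarrow>
     (\<forall>a\<in>E. q a \<in> carrier_mat n2 n1) \<and>
     (\<forall>a\<in>E. \<forall>a'\<in>E. q (a + a') = q a + q a') \<and>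
     (\<forall>t. \<forall>a\<in>E. q (t \<cdot>\<^sub>m a) = t \<cdot>\<^sub>m q a)"

text \<open>Symm(phi_E) = {0}: every q in Hom(E,Hom(G1,G2)) with
  q(a') o a = q(a) o a' for all a, a' in E is the zero map on E.\<close>
definition symm_trivial :: "complex mat set \<Rightarrow> nat \<Rightarrow> nat \<Rightarrow> bool" where
  "symm_trivial E n2 n1 \<longleftrightarrow>
     (\<forall>q. hom_on E n2 n1 q \<and> (\<forall>a\<in>E. \<forall>a'\<in>E. q a' * a = q a * a')
          \<longrightarrow> (\<forall>a\<in>E. q a = 0\<^sub>m n2 n1))"

end

theory Submission
  imports Defs
begin

text \<open>Fix a basis \<open>b\<^sub>r\<close> (\<open>r < k\<close>) of \<open>E\<close>. A symmetric \<open>q\<close> is determined by the \<open>q(b\<^sub>r)\<close>, and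
  the relations \<open>q(b\<^sub>s) b\<^sub>r = q(b\<^sub>r) b\<^sub>s\<close> form, row by row, a homogeneous linear system \<open>M y = 0\<close>
  whose coefficients are entries of the \<open>b\<^sub>r\<close>; \<open>Symm(\<phi>\<^sub>E) = 0\<close> iff it has only the trivial
  solution. This follows from \<open>det (M\<^sup>T M) \<noteq> 0\<close>, and is equivalent to it when \<open>M\<close> is real.
  Normalising the basis at a \<open>k\<close>-set \<open>S\<close> of positions by Cramer's rule turns its entries into
  signed Pluecker coordinates, so \<open>p\<^sub>S det (M\<^sup>T M)\<close> becomes a homogeneous polynomial in the
  Pluecker coordinates of \<open>E\<close> whose non-vanishing forces \<open>Symm(\<phi>\<^sub>E) = 0\<close>. It does not vanish
  on a real subspace in normal form at \<open>S\<close> that contains three explicit matrices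
  \<open>alpha1, alpha2, alpha3\<close>, because the symmetry relations among these alone already force
  \<open>q = 0\<close>. Their pivots take three positions, or two when \<open>dim G\<^sup>1 = 1\<close> and \<open>alpha3 = 0\<close>;
  this is where the lower bounds on \<open>k\<close> come from.\<close>

section \<open>Polynomial functions\<close>

lemma polyfun_diff: "polyfun f \<Longrightarrow> polyfun g \<Longrightarrow> polyfun (\<lambda>x. f x - g x)"
  using padd[OF _ pmult[OF pconst[of "-1"]], of f g] by simp

lemma polyfun_sum: "finite A \<Longrightarrow> (\<And>a. a \<in> A \<Longrightarrow> polyfun (g a)) \<Longrightarrow> polyfun (\<lambda>x. \<Sum>a\<in>A. g a x)"
  by (induction A rule: finite_induct) (auto intro: pconst padd)

lemma polyfun_prod: "finite A \<Longrightarrow> (\<And>a. a \<in> A \<Longrightarrow> polyfun (g a)) \<Longrightarrow> polyfun (\<lambda>x. \<Prod>a\<in>A. g a x)"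
  by (induction A rule: finite_induct) (auto intro: pconst pmult)

lemma polyfun_If: "polyfun f \<Longrightarrow> polyfun g \<Longrightarrow> polyfun (\<lambda>x. if P then f x else g x)"
  by (cases P) simp_all

lemma polyfun_det:
  assumes "\<And>i j. i < n \<Longrightarrow> j < n \<Longrightarrow> polyfun (\<lambda>x. h x i j)"
  shows "polyfun (\<lambda>x. det (mat n n (\<lambda>(i, j). h x i j)))"
proof -
  have "polyfun (\<lambda>x. \<Sum>p\<in>{p. p permutes {0..<n}}. signof p * (\<Prod>i\<in>{0..<n}. h x i (p i)))"
  proof (intro polyfun_sum pmult pconst polyfun_prod)
    fix p i assume "p \<in> {p. p permutes {0..<n}}" "i \<in> {0..<n}"
    then show "polyfun (\<lambda>x. h x i (p i))"
      using assms permutes_in_image by fastforce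
  qed (simp_all add: finite_permutations)
  moreover have "det (mat n n (\<lambda>(i, j). h x i j))
      = (\<Sum>p\<in>{p. p permutes {0..<n}}. signof p * (\<Prod>i\<in>{0..<n}. h x i (p i)))" for x
    by (subst det_def'[of _ n]) (auto intro!: sum.cong prod.cong)
  ultimately show ?thesis
    by simp
qed

section \<open>Gram matrices\<close>

definition gram_mat :: "nat \<Rightarrow> 'e set \<Rightarrow> ('e \<Rightarrow> nat \<Rightarrow> complex) \<Rightarrow> complex mat" where
  "gram_mat n I m = mat n n (\<lambda>(u, u'). \<Sum>e\<in>I. m e u * m e u')"

lemma gram_mat_carrier: "gram_mat n I m \<in> carrier_mat n n"
  by (simp add: gram_mat_def)

lemma gram_mat_mult_vec:
  assumes "u < n"
  shows "(gram_mat n I m *\<^sub>v vec n v) $ u = (\<Sum>e\<in>I. m e u * (\<Sum>u'<n. m e u' * v u'))"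
proof -
  have "(gram_mat n I m *\<^sub>v vec n v) $ u = (\<Sum>u'<n. (\<Sum>e\<in>I. m e u * m e u') * v u')"
    using assms by (auto simp: gram_mat_def scalar_prod_def lessThan_atLeast0 intro!: sum.cong)
  also have "\<dots> = (\<Sum>e\<in>I. m e u * (\<Sum>u'<n. m e u' * v u'))"
    by (simp add: sum_distrib_left sum_distrib_right mult.assoc sum.swap[of _ I])
  finally show ?thesis .
qed

lemma gram_mat_det_nonzero_imp_kernel_trivial:
  assumes "det (gram_mat n I m) \<noteq> 0" and "\<And>e. e \<in> I \<Longrightarrow> (\<Sum>u<n. m e u * v u) = 0" and "u < n"
  shows "v u = 0"
proof -
  have "gram_mat n I m *\<^sub>v vec n v = 0\<^sub>v n"
  proof (rule eq_vecI)
    fix i assume "i < dim_vec (0\<^sub>v n)"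
    then show "(gram_mat n I m *\<^sub>v vec n v) $ i = 0\<^sub>v n $ i"
      by (simp add: gram_mat_mult_vec assms(2))
  qed (simp add: gram_mat_def)
  then have "vec n v = 0\<^sub>v n"
    using det_0_iff_vec_prod_zero[OF gram_mat_carrier] assms(1) vec_carrier by blast
  then show ?thesis
    using assms(3) by (metis index_vec index_zero_vec(1))
qed

text \<open>Over \<open>\<complex>\<close> the converse needs real forms: then \<open>\<langle>v, gram v\<rangle> = \<Sum>\<^sub>e |m\<^sub>e(v)|\<^sup>2\<close>.\<close>
lemma gram_mat_det_nonzero_if_real:
  assumes "finite I" and real: "\<And>e u. e \<in> I \<Longrightarrow> u < n \<Longrightarrow> m e u \<in> \<real>"
    and kernel: "\<And>v. (\<forall>e\<in>I. (\<Sum>u<n. m e u * v u) = 0) \<Longrightarrow> \<forall>u<n. v u = 0"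
  shows "det (gram_mat n I m) \<noteq> 0"
proof
  assume "det (gram_mat n I m) = 0"
  then obtain w where w: "w \<in> carrier_vec n" "w \<noteq> 0\<^sub>v n" "gram_mat n I m *\<^sub>v w = 0\<^sub>v n"
    using det_0_iff_vec_prod_zero[OF gram_mat_carrier] by blast
  have w_vec: "w = vec n (\<lambda>u. w $ u)"
    using w(1) by auto
  define z where "z e = (\<Sum>u<n. m e u * w $ u)" for e
  have cnj_z: "cnj (z e) = (\<Sum>u<n. m e u * cnj (w $ u))" if "e \<in> I" for e
    using real that by (simp add: z_def Reals_cnj_iff)
  have "0 = (\<Sum>u<n. cnj (w $ u) * (gram_mat n I m *\<^sub>v w) $ u)"
    using w(3) by simp
  also have "\<dots> = (\<Sum>u<n. cnj (w $ u) * (\<Sum>e\<in>I. m e u * z e))"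
    by (subst w_vec) (simp add: gram_mat_mult_vec z_def)
  also have "\<dots> = (\<Sum>e\<in>I. z e * cnj (z e))"
    by (simp add: cnj_z sum_distrib_left sum_distrib_right sum.swap[of _ I] mult_ac cong: sum.cong)
  also have "\<dots> = (\<Sum>e\<in>I. of_real ((cmod (z e))\<^sup>2))"
    by (simp only: complex_norm_square)
  finally have "(\<Sum>e\<in>I. (cmod (z e))\<^sup>2) = 0"
    by (metis of_real_eq_0_iff of_real_sum)
  then have "\<forall>e\<in>I. z e = 0"
    using sum_nonneg_eq_0_iff[OF assms(1), of "\<lambda>e. (cmod (z e))\<^sup>2"] by simp
  then have "\<forall>u<n. w $ u = 0"
    using kernel[of "\<lambda>u. w $ u"] by (simp add: z_def)
  with w(1,2) show False
    by (metis carrier_vecD eq_vecI index_zero_vec)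
qed

lemma polyfun_det_gram_mat:
  assumes "finite I" and "\<And>e u. polyfun (\<lambda>x. m x e u)"
  shows "polyfun (\<lambda>x. det (gram_mat n I (m x)))"
  unfolding gram_mat_def by (intro polyfun_det polyfun_sum pmult assms)

lemma gram_mat_scale: "gram_mat n I (\<lambda>e u. c * m e u) = c\<^sup>2 \<cdot>\<^sub>m gram_mat n I m"
  by (rule eq_matI) (auto simp: gram_mat_def sum_distrib_left power2_eq_square mult_ac)

lemma mult_add_less_mult:
  fixes r l k n :: nat
  assumes "r < k" and "l < n"
  shows "r * n + l < k * n"
proof -
  have "r * n + l < Suc r * n" "Suc r * n \<le> k * n"
    using assms mult_le_mono1[of "Suc r" k n] by simp_all
  then show ?thesis
    by linarith
qed

section \<open>Rigid families of matrices\<close>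

lemma div_mod_less_mult:
  fixes u k n :: nat
  assumes "u < k * n"
  shows "u div n < k" "u mod n < n"
proof -
  have "n > 0"
    using assms by (cases n) auto
  then show "u div n < k" "u mod n < n"
    using assms by (simp_all add: less_mult_imp_div_less)
qed

lemma sum_lessThan_mult:
  fixes k n :: nat
  shows "(\<Sum>u<k * n. f u) = (\<Sum>r<k. \<Sum>l<n. f (r * n + l))"
proof -
  have "(\<Sum>l<n. f (r * n + l)) = sum f {r * n..<r * n + n}" for r
    by (rule sum.reindex_bij_witness[of _ "\<lambda>u. u - r * n" "\<lambda>l. r * n + l"]) auto
  then show ?thesis
    using sum.nat_group[of f n k] by (simp add: mult.commute)
qed

text \<open>\<open>g r l j\<close> is entry \<open>(l, j)\<close> of the \<open>r\<close>-th member of a family of \<open>n1 \<times> n0\<close> matrices, and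
  \<open>y r\<close> plays the role of a row of \<open>q\<close> applied to that member.\<close>
definition rigid :: "nat \<Rightarrow> nat \<Rightarrow> nat \<Rightarrow> (nat \<Rightarrow> nat \<Rightarrow> nat \<Rightarrow> complex) \<Rightarrow> bool" where
  "rigid n1 n0 k g \<longleftrightarrow>
     (\<forall>y. (\<forall>r<k. \<forall>s<k. \<forall>j<n0. (\<Sum>l<n1. y s l * g r l j) = (\<Sum>l<n1. y r l * g s l j))
          \<longrightarrow> (\<forall>r<k. \<forall>l<n1. y r l = 0))"

text \<open>Row \<open>(r, s, j)\<close> of the system defining rigidity, in the unknowns \<open>v (r * n1 + l) = y r l\<close>.\<close>
definition symm_form :: "nat \<Rightarrow> (nat \<Rightarrow> nat \<Rightarrow> nat \<Rightarrow> complex) \<Rightarrow> nat \<times> nat \<times> nat \<Rightarrow> nat \<Rightarrow> complex" where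
  "symm_form n1 g = (\<lambda>(r, s, j) u.
     (if u div n1 = s then g r (u mod n1) j else 0) - (if u div n1 = r then g s (u mod n1) j else 0))"

definition symm_gram :: "nat \<Rightarrow> nat \<Rightarrow> nat \<Rightarrow> (nat \<Rightarrow> nat \<Rightarrow> nat \<Rightarrow> complex) \<Rightarrow> complex mat" where
  "symm_gram n1 n0 k g = gram_mat (k * n1) ({..<k} \<times> {..<k} \<times> {..<n0}) (symm_form n1 g)"

lemma symm_form_sum:
  assumes "r < k" "s < k"
  shows "(\<Sum>u<k * n1. symm_form n1 g (r, s, j) u * v u)
    = (\<Sum>l<n1. v (s * n1 + l) * g r l j) - (\<Sum>l<n1. v (r * n1 + l) * g s l j)"
proof -
  have "(\<Sum>u<k * n1. symm_form n1 g (r, s, j) u * v u)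
      = (\<Sum>r'<k. \<Sum>l<n1. ((if r' = s then g r l j else 0) - (if r' = r then g s l j else 0))
                            * v (r' * n1 + l))"
    unfolding sum_lessThan_mult by (intro sum.cong refl) (simp add: symm_form_def)
  also have "\<dots> = (\<Sum>r'<k. (if r' = s then \<Sum>l<n1. v (s * n1 + l) * g r l j else 0)
                        - (if r' = r then \<Sum>l<n1. v (r * n1 + l) * g s l j else 0))"
    by (intro sum.cong refl) (auto simp: left_diff_distrib sum_subtractf sum_negf mult.commute)
  also have "\<dots> = (\<Sum>l<n1. v (s * n1 + l) * g r l j) - (\<Sum>l<n1. v (r * n1 + l) * g s l j)"
    using assms by (simp add: sum_subtractf)
  finally show ?thesis .
qed

lemma rigid_iff_symm_forms_kernel_trivial:
  "rigid n1 n0 k g \<longleftrightarrow>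
     (\<forall>v. (\<forall>e\<in>{..<k} \<times> {..<k} \<times> {..<n0}. (\<Sum>u<k * n1. symm_form n1 g e u * v u) = 0)
          \<longrightarrow> (\<forall>u<k * n1. v u = 0))"
    (is "_ \<longleftrightarrow> (\<forall>v. ?ker v \<longrightarrow> _)")
proof -
  have symm_iff_ker: "(\<forall>r<k. \<forall>s<k. \<forall>j<n0.
      (\<Sum>l<n1. v (s * n1 + l) * g r l j) = (\<Sum>l<n1. v (r * n1 + l) * g s l j)) \<longleftrightarrow> ?ker v" for v
    by (auto simp: symm_form_sum)
  show ?thesis
    unfolding rigid_def
  proof (intro iffI allI impI)
    fix v u
    assume rig: "\<forall>y. (\<forall>r<k. \<forall>s<k. \<forall>j<n0. (\<Sum>l<n1. y s l * g r l j) = (\<Sum>l<n1. y r l * g s l j))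
        \<longrightarrow> (\<forall>r<k. \<forall>l<n1. y r l = 0)"
      and "?ker v" and u: "u < k * n1"
    then have "\<forall>r<k. \<forall>l<n1. v (r * n1 + l) = 0"
      using rig[rule_format, of "\<lambda>r l. v (r * n1 + l)"] symm_iff_ker[of v] by blast
    then have "v (u div n1 * n1 + u mod n1) = 0"
      using div_mod_less_mult[OF u] by blast
    then show "v u = 0"
      by simp
  next
    fix y r l
    assume ker: "\<forall>v. ?ker v \<longrightarrow> (\<forall>u<k * n1. v u = 0)"
      and symm: "\<forall>r<k. \<forall>s<k. \<forall>j<n0. (\<Sum>l<n1. y s l * g r l j) = (\<Sum>l<n1. y r l * g s l j)"
      and rl: "r < k" "l < n1"
    let ?v = "\<lambda>u. y (u div n1) (u mod n1)"
    have "(\<Sum>l<n1. ?v (r * n1 + l) * g s l j) = (\<Sum>l<n1. y r l * g s l j)" for r s j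
      by (intro sum.cong refl) simp
    then have "?ker ?v"
      using symm symm_iff_ker[of ?v] by simp
    then have "\<forall>u<k * n1. ?v u = 0"
      by (rule mp[OF spec[OF ker, of ?v]])
    then have "?v (r * n1 + l) = 0"
      using mult_add_less_mult[OF rl] by blast
    then show "y r l = 0"
      using rl by simp
  qed
qed

lemma rigid_if_det_symm_gram_nonzero:
  assumes "det (symm_gram n1 n0 k g) \<noteq> 0"
  shows "rigid n1 n0 k g"
  unfolding rigid_iff_symm_forms_kernel_trivial
proof (intro allI impI)
  fix v u
  assume "\<forall>e\<in>{..<k} \<times> {..<k} \<times> {..<n0}. (\<Sum>u<k * n1. symm_form n1 g e u * v u) = 0"
    and "u < k * n1"
  then show "v u = 0"
    using gram_mat_det_nonzero_imp_kernel_trivial[OF assms[unfolded symm_gram_def]] by blast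
qed

lemma det_symm_gram_nonzero_if_real:
  assumes "\<And>r l j. r < k \<Longrightarrow> l < n1 \<Longrightarrow> j < n0 \<Longrightarrow> g r l j \<in> \<real>" and "rigid n1 n0 k g"
  shows "det (symm_gram n1 n0 k g) \<noteq> 0"
  unfolding symm_gram_def
proof (rule gram_mat_det_nonzero_if_real)
  show "symm_form n1 g e u \<in> \<real>" if "e \<in> {..<k} \<times> {..<k} \<times> {..<n0}" "u < k * n1" for e u
    using assms(1) that(1) div_mod_less_mult[OF that(2)] by (auto simp: symm_form_def)
  show "\<forall>u<k * n1. v u = 0"
    if "\<forall>e\<in>{..<k} \<times> {..<k} \<times> {..<n0}. (\<Sum>u<k * n1. symm_form n1 g e u * v u) = 0" for v
    using assms(2) that unfolding rigid_iff_symm_forms_kernel_trivial by blast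
qed simp

section \<open>Symmetric maps on spans\<close>

lemma lincomb_carrier [simp]: "lincomb n1 n0 k c b \<in> carrier_mat n1 n0"
  by (simp add: lincomb_def)

lemma lincomb_dim [simp]:
  "dim_row (lincomb n1 n0 k c b) = n1" "dim_col (lincomb n1 n0 k c b) = n0"
  by (simp_all add: lincomb_def)

lemma lincomb_index [simp]:
  "l < n1 \<Longrightarrow> j < n0 \<Longrightarrow> lincomb n1 n0 k c b $$ (l, j) = (\<Sum>r<k. c r * b r $$ (l, j))"
  by (simp add: lincomb_def)

lemma lincomb_in_span_mats: "lincomb n1 n0 k c b \<in> span_mats n1 n0 k b"
  by (auto simp: span_mats_def)

lemma lincomb_cong:
  "(\<And>r. r < k \<Longrightarrow> c r = c' r) \<Longrightarrow> lincomb n1 n0 k c b = lincomb n1 n0 k c' b"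
  by (rule eq_matI) auto

lemma lincomb_delta:
  assumes "m < k" and "b m \<in> carrier_mat n1 n0"
  shows "lincomb n1 n0 k (\<lambda>r. if r = m then t else 0) b = t \<cdot>\<^sub>m b m"
proof (rule eq_matI)
  fix i j assume ij: "i < dim_row (t \<cdot>\<^sub>m b m)" "j < dim_col (t \<cdot>\<^sub>m b m)"
  have "(\<Sum>r<k. (if r = m then t else 0) * b r $$ (i, j)) = (\<Sum>r<k. if r = m then t * b m $$ (i, j) else 0)"
    by (rule sum.cong) auto
  then show "lincomb n1 n0 k (\<lambda>r. if r = m then t else 0) b $$ (i, j) = (t \<cdot>\<^sub>m b m) $$ (i, j)"
    using assms ij by simp
qed (use assms in auto)

lemma smult_in_span_mats:
  "m < k \<Longrightarrow> b m \<in> carrier_mat n1 n0 \<Longrightarrow> t \<cdot>\<^sub>m b m \<in> span_mats n1 n0 k b"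
  using lincomb_delta[of m k b] lincomb_in_span_mats by metis

lemma in_span_mats:
  assumes "m < k" and "b m \<in> carrier_mat n1 n0"
  shows "b m \<in> span_mats n1 n0 k b"
proof -
  have "1 \<cdot>\<^sub>m b m = b m"
    using assms(2) by (intro eq_matI) auto
  then show ?thesis
    using smult_in_span_mats[of m k b, OF assms, of 1] by simp
qed

lemma lincomb_prefix_in_span_mats:
  assumes "m \<le> k"
  shows "lincomb n1 n0 m c b \<in> span_mats n1 n0 k b"
proof -
  have "lincomb n1 n0 m c b = lincomb n1 n0 k (\<lambda>r. if r < m then c r else 0) b"
    using assms by (intro eq_matI) (auto intro!: sum.mono_neutral_cong_left split: if_splits)
  then show ?thesis
    using lincomb_in_span_mats by simp
qed

lemma lincomb_lincomb:
  "lincomb n1 n0 k c (\<lambda>r. lincomb n1 n0 k (C r) b) = lincomb n1 n0 k (\<lambda>s. \<Sum>r<k. c r * C r s) b"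
  by (rule eq_matI)
    (auto simp: sum_distrib_left sum_distrib_right mult.assoc intro: sum.swap)

lemma span_mats_change_basis:
  assumes C: "C \<in> carrier_mat k k" and D: "D \<in> carrier_mat k k" and DC: "D * C = 1\<^sub>m k"
  shows "span_mats n1 n0 k (\<lambda>r. lincomb n1 n0 k (\<lambda>s. C $$ (r, s)) b) = span_mats n1 n0 k b"
proof
  show "span_mats n1 n0 k (\<lambda>r. lincomb n1 n0 k (\<lambda>s. C $$ (r, s)) b) \<subseteq> span_mats n1 n0 k b"
    by (auto simp: span_mats_def lincomb_lincomb)
next
  show "span_mats n1 n0 k b \<subseteq> span_mats n1 n0 k (\<lambda>r. lincomb n1 n0 k (\<lambda>s. C $$ (r, s)) b)"
  proof
    fix a assume "a \<in> span_mats n1 n0 k b"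
    then obtain c where a: "a = lincomb n1 n0 k c b"
      by (auto simp: span_mats_def)
    have "(\<Sum>r<k. (\<Sum>s<k. c s * D $$ (s, r)) * C $$ (r, s')) = c s'" if "s' < k" for s'
    proof -
      have "(\<Sum>r<k. (\<Sum>s<k. c s * D $$ (s, r)) * C $$ (r, s')) = (\<Sum>s<k. c s * (D * C) $$ (s, s'))"
        using C D that
        by (auto simp: sum_distrib_left sum_distrib_right mult.assoc scalar_prod_def
            lessThan_atLeast0 intro: sum.swap)
      also have "\<dots> = c s'"
        using DC that by (simp add: if_distrib sum.If_cases)
      finally show ?thesis .
    qed
    then have "a = lincomb n1 n0 k (\<lambda>r. \<Sum>s<k. c s * D $$ (s, r)) (\<lambda>r. lincomb n1 n0 k (\<lambda>s. C $$ (r, s)) b)"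
      unfolding a lincomb_lincomb by (intro lincomb_cong) simp
    then show "a \<in> span_mats n1 n0 k (\<lambda>r. lincomb n1 n0 k (\<lambda>s. C $$ (r, s)) b)"
      using lincomb_in_span_mats by simp
  qed
qed

lemma hom_on_vanishes_on_span_mats:
  assumes q: "hom_on (span_mats n1 n0 k b) n2 n1 q"
    and b: "\<And>r. r < k \<Longrightarrow> b r \<in> carrier_mat n1 n0"
    and zero: "\<And>r. r < k \<Longrightarrow> q (b r) = 0\<^sub>m n2 n1"
    and a: "a \<in> span_mats n1 n0 k b"
  shows "q a = 0\<^sub>m n2 n1"
proof -
  let ?E = "span_mats n1 n0 k b"
  have smult_in: "t \<cdot>\<^sub>m b m \<in> ?E" and b_in: "b m \<in> ?E" if "m < k" for t m
    using smult_in_span_mats in_span_mats that b by blast+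
  have hom: "\<And>a a'. a \<in> ?E \<Longrightarrow> a' \<in> ?E \<Longrightarrow> q (a + a') = q a + q a'"
    "\<And>t a. a \<in> ?E \<Longrightarrow> q (t \<cdot>\<^sub>m a) = t \<cdot>\<^sub>m q a"
    "\<And>a. a \<in> ?E \<Longrightarrow> q a \<in> carrier_mat n2 n1"
    using q by (auto simp: hom_on_def)
  have "q (lincomb n1 n0 m c b) = 0\<^sub>m n2 n1" if "m \<le> k" for m c
    using that
  proof (induction m)
    case 0
    let ?z = "lincomb n1 n0 0 c b"
    have z_in: "?z \<in> ?E"
      by (simp add: lincomb_prefix_in_span_mats)
    have "?z = 0 \<cdot>\<^sub>m ?z"
      by (intro eq_matI) auto
    then have "q ?z = q (0 \<cdot>\<^sub>m ?z)"
      by (rule arg_cong)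
    also have "\<dots> = 0 \<cdot>\<^sub>m q ?z"
      using hom(2)[OF z_in] .
    also have "\<dots> = 0\<^sub>m n2 n1"
      using hom(3)[OF z_in] by (intro eq_matI) auto
    finally show ?case .
  next
    case (Suc m)
    have "lincomb n1 n0 (Suc m) c b = lincomb n1 n0 m c b + c m \<cdot>\<^sub>m b m"
      using b[of m] Suc.prems by (intro eq_matI) auto
    then have "q (lincomb n1 n0 (Suc m) c b) = q (lincomb n1 n0 m c b) + c m \<cdot>\<^sub>m q (b m)"
      using Suc.prems hom(1)[OF lincomb_prefix_in_span_mats smult_in] hom(2)[OF b_in]
      by simp
    then show ?case
      using Suc zero[of m] by simp
  qed
  with a show ?thesis
    by (auto simp: span_mats_def)
qed

lemma mult_mat_index:
  "A \<in> carrier_mat n2 n1 \<Longrightarrow> B \<in> carrier_mat n1 n0 \<Longrightarrow> i < n2 \<Longrightarrow> j < n0 \<Longrightarrow>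
   (A * B) $$ (i, j) = (\<Sum>l<n1. A $$ (i, l) * B $$ (l, j))"
  by (auto simp: scalar_prod_def lessThan_atLeast0 intro!: sum.cong)

lemma symm_trivial_if_rigid:
  assumes b: "\<And>r. r < k \<Longrightarrow> b r \<in> carrier_mat n1 n0"
    and rig: "rigid n1 n0 k (\<lambda>r l j. b r $$ (l, j))"
  shows "symm_trivial (span_mats n1 n0 k b) n2 n1"
  unfolding symm_trivial_def
proof (intro allI impI ballI)
  let ?E = "span_mats n1 n0 k b"
  fix q a
  assume "hom_on ?E n2 n1 q \<and> (\<forall>a\<in>?E. \<forall>a'\<in>?E. q a' * a = q a * a')" and a: "a \<in> ?E"
  then have q: "hom_on ?E n2 n1 q" and symm: "\<And>a a'. a \<in> ?E \<Longrightarrow> a' \<in> ?E \<Longrightarrow> q a' * a = q a * a'"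
    by auto
  have b_in: "b r \<in> ?E" if "r < k" for r
    using in_span_mats[of r k b] that b by blast
  have q_carrier: "q (b r) \<in> carrier_mat n2 n1" if "r < k" for r
    using q b_in[OF that] by (simp add: hom_on_def)
  have zero: "q (b r) = 0\<^sub>m n2 n1" if r: "r < k" for r
  proof (rule eq_matI)
    fix i l assume "i < dim_row (0\<^sub>m n2 n1)" "l < dim_col (0\<^sub>m n2 n1)"
    then have i: "i < n2" and l: "l < n1"
      by auto
    have "(\<Sum>l<n1. q (b s) $$ (i, l) * b r' $$ (l, j)) = (\<Sum>l<n1. q (b r') $$ (i, l) * b s $$ (l, j))"
      if "r' < k" "s < k" "j < n0" for r' s j
    proof -
      have "(q (b s) * b r') $$ (i, j) = (q (b r') * b s) $$ (i, j)"
        using symm[OF b_in[OF that(1)] b_in[OF that(2)]] by simp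
      then show ?thesis
        using mult_mat_index[OF q_carrier[OF that(1)] b[OF that(2)] i that(3)]
          mult_mat_index[OF q_carrier[OF that(2)] b[OF that(1)] i that(3)] by simp
    qed
    then have "\<forall>r<k. \<forall>l<n1. q (b r) $$ (i, l) = 0"
      by (intro mp[OF spec[OF rig[unfolded rigid_def], of "\<lambda>r l. q (b r) $$ (i, l)"]]) blast
    then show "q (b r) $$ (i, l) = 0\<^sub>m n2 n1 $$ (i, l)"
      using r l i by simp
  qed (use q_carrier[OF r] in auto)
  show "q a = 0\<^sub>m n2 n1"
    by (rule hom_on_vanishes_on_span_mats[OF q b zero a])
qed

section \<open>Pluecker coordinates and Cramer's rule\<close>

definition pivot_minor :: "nat \<Rightarrow> nat \<Rightarrow> nat set \<Rightarrow> (nat \<Rightarrow> complex mat) \<Rightarrow> complex mat" where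
  "pivot_minor n0 k S b =
     mat k k (\<lambda>(r, c). let p = sorted_list_of_set S ! c in b r $$ (p div n0, p mod n0))"

lemma plucker_eq_det_pivot_minor:
  "S \<subseteq> {..<n1 * n0} \<Longrightarrow> card S = k \<Longrightarrow> plucker k n1 n0 b S = det (pivot_minor n0 k S b)"
  by (simp add: plucker_def pivot_minor_def)

definition sort_sign :: "nat list \<Rightarrow> int" where
  "sort_sign L =
     (if distinct L
      then sign (SOME p. p permutes {..<length L} \<and> permute_list p (sorted_list_of_set (set L)) = L)
      else 0)"

lemma det_permute_cols:
  assumes A: "A \<in> carrier_mat n n" and p: "p permutes {..<n}"
  shows "det (mat n n (\<lambda>(i, j). A $$ (i, p j))) = signof p * det A"
proof -
  have "mat n n (\<lambda>(i, j). A $$ (i, p j)) = transpose_mat (mat n n (\<lambda>(i, j). transpose_mat A $$ (p i, j)))"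
    using A permutes_in_image[OF p] by (intro eq_matI) auto
  then have "det (mat n n (\<lambda>(i, j). A $$ (i, p j))) = det (mat n n (\<lambda>(i, j). transpose_mat A $$ (p i, j)))"
    by (metis carrier_matI det_transpose dim_col_mat(1) dim_row_mat(1))
  also have "\<dots> = signof p * det (transpose_mat A)"
    using A p by (intro det_permute_rows) (auto simp: lessThan_atLeast0)
  finally show ?thesis
    using det_transpose[OF A] by simp
qed

lemma det_sort_cols:
  fixes g :: "nat \<Rightarrow> nat \<Rightarrow> 'a :: comm_ring_1"
  assumes len: "length L = k"
  shows "det (mat k k (\<lambda>(s, c). g s (L ! c)))
    = of_int (sort_sign L) * det (mat k k (\<lambda>(s, c). g s (sorted_list_of_set (set L) ! c)))"
proof (cases "distinct L")
  case True
  let ?SL = "sorted_list_of_set (set L)"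
  let ?P = "\<lambda>p. p permutes {..<length L} \<and> permute_list p ?SL = L"
  define p where "p = (SOME p. ?P p)"
  have "mset L = mset ?SL"
    using True by (simp add: set_eq_iff_mset_eq_distinct[symmetric])
  moreover have "length ?SL = length L"
    using True by (simp add: distinct_card)
  ultimately have "\<exists>p. ?P p"
    by (metis mset_eq_permutation)
  then have p: "p permutes {..<k}" "permute_list p ?SL = L"
    unfolding p_def using someI_ex[of ?P] len by auto
  have "L ! c = ?SL ! p c" if "c < k" for c
    using permute_list_nth[of p ?SL c] p that len True by (simp add: distinct_card)
  then have "mat k k (\<lambda>(s, c). g s (L ! c)) = mat k k (\<lambda>(s, c). mat k k (\<lambda>(s, c). g s (?SL ! c)) $$ (s, p c))"
    using permutes_in_image[OF p(1)] by (intro eq_matI) auto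
  moreover have "sort_sign L = sign p"
    using True by (simp add: sort_sign_def p_def)
  ultimately show ?thesis
    using det_permute_cols[OF _ p(1), of "mat k k (\<lambda>(s, c). g s (?SL ! c))"] by simp
next
  case False
  then obtain i j where "i < k" "j < k" "i \<noteq> j" "L ! i = L ! j"
    using len by (metis distinct_conv_nth)
  then have "det (mat k k (\<lambda>(s, c). g s (L ! c))) = 0"
    by (intro det_identical_columns[of _ k i j]) auto
  then show ?thesis
    using False by (simp add: sort_sign_def)
qed

lemma adj_mat_mult_vec_eq_det_replace_col:
  fixes A :: "'a :: field mat"
  assumes A: "A \<in> carrier_mat n n" and det: "det A \<noteq> 0" and v: "v \<in> carrier_vec n" and i: "i < n"
  shows "(adj_mat A *\<^sub>v v) $ i = det (replace_col A v i)"
proof -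
  let ?x = "(1 / det A) \<cdot>\<^sub>v (adj_mat A *\<^sub>v v)"
  have adj: "adj_mat A \<in> carrier_mat n n"
    using adj_mat(1)[OF A] .
  have "A *\<^sub>v ?x = (1 / det A) \<cdot>\<^sub>v ((A * adj_mat A) *\<^sub>v v)"
    using A adj v by (simp add: mult_mat_vec assoc_mult_mat_vec)
  also have "(A * adj_mat A) *\<^sub>v v = det A \<cdot>\<^sub>v v"
    unfolding adj_mat(2)[OF A] using v
    by (intro eq_vecI) (auto simp: scalar_prod_def if_distrib[of "\<lambda>x. _ * x * _"] cong: if_cong)
  also have "(1 / det A) \<cdot>\<^sub>v (det A \<cdot>\<^sub>v v) = v"
    using det by (simp add: smult_smult_assoc)
  finally have "det (replace_col A v i) = ?x $ i * det A"
    using cramer_lemma_mat[OF A _ i, of ?x] adj v by simp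
  then show ?thesis
    using det adj v i by simp
qed

text \<open>By Cramer's rule, \<open>cramer_coord S r t (plucker k n1 n0 b)\<close> is the flat entry \<open>t\<close> of the
  \<open>r\<close>-th matrix of the basis \<open>adj A \<cdot> b\<close> of \<open>span b\<close>, where \<open>A\<close> is the pivot minor of \<open>b\<close> at \<open>S\<close>;
  it is a signed Pluecker coordinate, hence linear in the Pluecker coordinates.\<close>
definition cramer_coord :: "nat set \<Rightarrow> nat \<Rightarrow> nat \<Rightarrow> (nat set \<Rightarrow> complex) \<Rightarrow> complex" where
  "cramer_coord S r t x = (let L = (sorted_list_of_set S)[r := t] in of_int (sort_sign L) * x (set L))"

lemma cramer_coord_plucker:
  assumes S: "S \<subseteq> {..<n1 * n0}" "card S = k" and det: "det (pivot_minor n0 k S b) \<noteq> 0"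
    and r: "r < k" and t: "t < n1 * n0"
  shows "cramer_coord S r t (plucker k n1 n0 b)
    = (\<Sum>s<k. adj_mat (pivot_minor n0 k S b) $$ (r, s) * b s $$ (t div n0, t mod n0))"
proof -
  let ?SL = "sorted_list_of_set S"
  let ?L = "?SL[r := t]"
  let ?A = "pivot_minor n0 k S b"
  let ?v = "vec k (\<lambda>s. b s $$ (t div n0, t mod n0))"
  let ?g = "\<lambda>s p. b s $$ (p div n0, p mod n0)"
  have fin: "finite S"
    using S(1) finite_subset by blast
  have len: "length ?SL = k" "length ?L = k"
    using S(2) fin by simp_all
  have A: "?A \<in> carrier_mat k k"
    by (simp add: pivot_minor_def)
  have "(\<Sum>s<k. adj_mat ?A $$ (r, s) * b s $$ (t div n0, t mod n0)) = (adj_mat ?A *\<^sub>v ?v) $ r"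
    using adj_mat(1)[OF A] r by (auto simp: scalar_prod_def lessThan_atLeast0 intro!: sum.cong)
  also have "\<dots> = det (replace_col ?A ?v r)"
    using adj_mat_mult_vec_eq_det_replace_col[OF A det _ r] by simp
  also have "replace_col ?A ?v r = mat k k (\<lambda>(s, c). ?g s (?L ! c))"
    using len by (intro eq_matI) (auto simp: replace_col_def pivot_minor_def nth_list_update Let_def)
  also have "det \<dots> = of_int (sort_sign ?L) * det (mat k k (\<lambda>(s, c). ?g s (sorted_list_of_set (set ?L) ! c)))"
    by (rule det_sort_cols[OF len(2)])
  also have "\<dots> = of_int (sort_sign ?L) * plucker k n1 n0 b (set ?L)"
  proof (cases "distinct ?L")
    case True
    have "set ?L \<subseteq> {..<n1 * n0}"
      using set_update_subset_insert[of ?SL r t] S(1) fin t by auto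
    moreover have "card (set ?L) = k"
      using True len by (simp add: distinct_card)
    ultimately show ?thesis
      by (simp add: plucker_def Let_def)
  qed (simp add: sort_sign_def)
  finally show ?thesis
    by (simp add: cramer_coord_def Let_def)
qed

text \<open>The factor \<open>x S\<close> is the pivot minor, so where the polynomial does not vanish the
  normalisation at \<open>S\<close> is an honest change of basis.\<close>
definition symm_poly :: "nat \<Rightarrow> nat \<Rightarrow> nat \<Rightarrow> nat set \<Rightarrow> (nat set \<Rightarrow> complex) \<Rightarrow> complex" where
  "symm_poly n1 n0 k S x = x S * det (symm_gram n1 n0 k (\<lambda>r l j. cramer_coord S r (l * n0 + j) x))"

lemma homogeneous_symm_poly: "homogeneous_poly (symm_poly n1 n0 k S)"
  unfolding homogeneous_poly_def
proof (intro conjI exI allI)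
  have "polyfun (\<lambda>x. cramer_coord S r t x)" for r t
    unfolding cramer_coord_def Let_def by (intro pmult pconst pvar)
  then have "polyfun (\<lambda>x. symm_form n1 (\<lambda>r l j. cramer_coord S r (l * n0 + j) x) e u)" for e u
    by (cases e) (auto simp: symm_form_def intro!: polyfun_diff polyfun_If pconst)
  then show "polyfun (symm_poly n1 n0 k S)"
    unfolding symm_poly_def[abs_def] symm_gram_def by (intro pmult pvar polyfun_det_gram_mat) auto
  fix t :: complex and x :: "nat set \<Rightarrow> complex"
  have "symm_form n1 (\<lambda>r l j. cramer_coord S r (l * n0 + j) (\<lambda>v. t * x v)) e u
      = t * symm_form n1 (\<lambda>r l j. cramer_coord S r (l * n0 + j) x) e u" for e u
    by (cases e) (simp add: symm_form_def cramer_coord_def Let_def algebra_simps)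
  then have "symm_form n1 (\<lambda>r l j. cramer_coord S r (l * n0 + j) (\<lambda>v. t * x v))
      = (\<lambda>e u. t * symm_form n1 (\<lambda>r l j. cramer_coord S r (l * n0 + j) x) e u)"
    by (intro ext)
  then show "symm_poly n1 n0 k S (\<lambda>v. t * x v) = t ^ (1 + 2 * (k * n1)) * symm_poly n1 n0 k S x"
    by (simp add: symm_poly_def symm_gram_def gram_mat_scale gram_mat_def power_mult power_add)
qed

lemma symm_gram_cong:
  assumes "\<And>r l j. r < k \<Longrightarrow> l < n1 \<Longrightarrow> j < n0 \<Longrightarrow> g r l j = g' r l j"
  shows "symm_gram n1 n0 k g = symm_gram n1 n0 k g'"
proof -
  have "symm_form n1 g e u = symm_form n1 g' e u"
    if "e \<in> {..<k} \<times> {..<k} \<times> {..<n0}" "u < k * n1" for e u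
    using that(1) assms div_mod_less_mult[OF that(2)] by (auto simp: symm_form_def)
  then show ?thesis
    unfolding symm_gram_def gram_mat_def by (intro eq_matI) (auto intro!: sum.cong)
qed

lemma symm_trivial_if_symm_poly_nonzero:
  assumes S: "S \<subseteq> {..<n1 * n0}" "card S = k" and basis: "is_basis n1 n0 k b E"
    and nonzero: "symm_poly n1 n0 k S (plucker k n1 n0 b) \<noteq> 0"
  shows "symm_trivial E n2 n1"
proof -
  let ?A = "pivot_minor n0 k S b"
  let ?N = "\<lambda>r. lincomb n1 n0 k (\<lambda>s. adj_mat ?A $$ (r, s)) b"
  have A: "?A \<in> carrier_mat k k"
    by (simp add: pivot_minor_def)
  have det: "det ?A \<noteq> 0"
    using nonzero plucker_eq_det_pivot_minor[OF S] by (auto simp: symm_poly_def)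
  have "cramer_coord S r (l * n0 + j) (plucker k n1 n0 b) = ?N r $$ (l, j)"
    if "r < k" "l < n1" "j < n0" for r l j
    using cramer_coord_plucker[OF S det that(1) mult_add_less_mult[OF that(2,3)]] that by simp
  then have "symm_gram n1 n0 k (\<lambda>r l j. cramer_coord S r (l * n0 + j) (plucker k n1 n0 b))
      = symm_gram n1 n0 k (\<lambda>r l j. ?N r $$ (l, j))"
    by (intro symm_gram_cong)
  then have "det (symm_gram n1 n0 k (\<lambda>r l j. ?N r $$ (l, j))) \<noteq> 0"
    using nonzero unfolding symm_poly_def by simp
  then have "symm_trivial (span_mats n1 n0 k ?N) n2 n1"
    by (intro symm_trivial_if_rigid lincomb_carrier rigid_if_det_symm_gram_nonzero)
  moreover have "span_mats n1 n0 k ?N = E"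
  proof -
    have "(1 / det ?A) \<cdot>\<^sub>m ?A * adj_mat ?A = (1 / det ?A) \<cdot>\<^sub>m (det ?A \<cdot>\<^sub>m 1\<^sub>m k)"
      using adj_mat[OF A] A by (simp add: mult_smult_assoc_mat)
    also have "\<dots> = 1\<^sub>m k"
      using det by (intro eq_matI) auto
    finally have inverse: "(1 / det ?A) \<cdot>\<^sub>m ?A * adj_mat ?A = 1\<^sub>m k" .
    show ?thesis
      using span_mats_change_basis[OF adj_mat(1)[OF A] _ inverse] A basis by (simp add: is_basis_def)
  qed
  ultimately show ?thesis
    by simp
qed

section \<open>The example\<close>

definition alpha1 :: "nat \<Rightarrow> nat \<Rightarrow> complex" where
  "alpha1 l j = (if l = j then 1 else 0)"

definition alpha2 :: "nat \<Rightarrow> nat \<Rightarrow> nat \<Rightarrow> complex" where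
  "alpha2 n1 l j = (if l = j then of_nat l else 0) + (if l = n1 - 1 \<and> j = n1 then 1 else 0)"

definition alpha3 :: "nat \<Rightarrow> nat \<Rightarrow> nat \<Rightarrow> complex" where
  "alpha3 n1 l j = (if j = Suc l \<and> j < n1 then 1 else 0)"

lemma sum_mult_alpha1: "(\<Sum>l<n1. z l * alpha1 l m) = (if m < n1 then z m else 0)"
proof -
  have "(\<Sum>l<n1. z l * alpha1 l m) = (\<Sum>l<n1. if l = m then z m else 0)"
    by (rule sum.cong) (auto simp: alpha1_def)
  then show ?thesis
    by simp
qed

lemma sum_mult_alpha2:
  assumes "1 \<le> n1"
  shows "(\<Sum>l<n1. z l * alpha2 n1 l m)
    = (if m < n1 then of_nat m * z m else 0) + (if m = n1 then z (n1 - 1) else 0)"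
proof -
  have "(\<Sum>l<n1. z l * alpha2 n1 l m) = (\<Sum>l<n1. (if l = m then of_nat m * z m else 0)
      + (if l = n1 - 1 then (if m = n1 then z (n1 - 1) else 0) else 0))"
    by (rule sum.cong) (auto simp: alpha2_def algebra_simps)
  then show ?thesis
    using assms by (simp add: sum.distrib)
qed

lemma sum_mult_alpha3: "(\<Sum>l<n1. z l * alpha3 n1 l m) = (if 1 \<le> m \<and> m < n1 then z (m - 1) else 0)"
proof -
  have "(\<Sum>l<n1. z l * alpha3 n1 l m)
      = (\<Sum>l<n1. if l = m - 1 then (if 1 \<le> m \<and> m < n1 then z (m - 1) else 0) else 0)"
    by (rule sum.cong) (auto simp: alpha3_def)
  then show ?thesis
    by auto
qed

text \<open>Here \<open>zi\<close> is a row of \<open>q(alphai)\<close>: the relation \<open>q(alpha2) alpha1 = q(alpha1) alpha2\<close> gives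
  \<open>z1 (n1 - 1) = 0\<close> and \<open>z2 m = m z1 m\<close>, the one with \<open>alpha3\<close> shifts \<open>z1\<close> into \<open>z3\<close>, and
  comparing both in \<open>q(alpha3) alpha2 = q(alpha2) alpha3\<close> yields \<open>(m + 1) z1 m = m z1 m\<close>.\<close>
lemma alpha_symm_rows_vanish:
  assumes n: "n1 < n0" "1 \<le> n1"
    and r21: "\<And>m. m < n0 \<Longrightarrow> (\<Sum>l<n1. z2 l * alpha1 l m) = (\<Sum>l<n1. z1 l * alpha2 n1 l m)"
    and r31: "\<And>m. m < n0 \<Longrightarrow> (\<Sum>l<n1. z3 l * alpha1 l m) = (\<Sum>l<n1. z1 l * alpha3 n1 l m)"
    and r32: "\<And>m. m < n0 \<Longrightarrow> (\<Sum>l<n1. z3 l * alpha2 n1 l m) = (\<Sum>l<n1. z2 l * alpha3 n1 l m)"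
    and l: "l < n1"
  shows "z1 l = 0"
proof (cases "l = n1 - 1")
  case True
  then show ?thesis
    using r21[of n1] n by (simp add: sum_mult_alpha1 sum_mult_alpha2)
next
  case False
  then have l1: "Suc l < n1"
    using l by linarith
  have z2: "z2 l = of_nat l * z1 l"
    using r21[of l] l n by (simp add: sum_mult_alpha1 sum_mult_alpha2)
  have z3: "z3 (Suc l) = z1 l"
    using r31[of "Suc l"] l1 n by (simp add: sum_mult_alpha1 sum_mult_alpha3)
  have "of_nat (Suc l) * z3 (Suc l) = z2 l"
    using r32[of "Suc l"] l1 n by (simp add: sum_mult_alpha2 sum_mult_alpha3)
  then have "of_nat (Suc l) * z1 l = of_nat l * z1 l"
    using z2 z3 by simp
  then show ?thesis
    by (simp add: algebra_simps)
qed

lemma symm_lincomb: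
  fixes g :: "nat \<Rightarrow> nat \<Rightarrow> nat \<Rightarrow> complex"
  assumes symm: "\<forall>r<k. \<forall>s<k. \<forall>j<n0. (\<Sum>l<n1. y s l * g r l j) = (\<Sum>l<n1. y r l * g s l j)"
    and j: "j < n0"
  shows "(\<Sum>l<n1. (\<Sum>s<k. c' s * y s l) * (\<Sum>r<k. c r * g r l j))
    = (\<Sum>l<n1. (\<Sum>r<k. c r * y r l) * (\<Sum>s<k. c' s * g s l j))"
proof -
  have expand: "(\<Sum>l<n1. (\<Sum>s<k. d' s * y s l) * (\<Sum>r<k. d r * g r l j))
      = (\<Sum>s<k. \<Sum>r<k. d' s * d r * (\<Sum>l<n1. y s l * g r l j))" for d d'
  proof -
    have "(\<Sum>l<n1. (\<Sum>s<k. d' s * y s l) * (\<Sum>r<k. d r * g r l j))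
        = (\<Sum>l<n1. \<Sum>r<k. \<Sum>s<k. d' s * d r * (y s l * g r l j))"
      by (simp add: sum_distrib_left sum_distrib_right mult_ac)
    also have "\<dots> = (\<Sum>r<k. \<Sum>l<n1. \<Sum>s<k. d' s * d r * (y s l * g r l j))"
      by (rule sum.swap)
    also have "\<dots> = (\<Sum>r<k. \<Sum>s<k. \<Sum>l<n1. d' s * d r * (y s l * g r l j))"
      by (rule sum.cong[OF refl], rule sum.swap)
    also have "\<dots> = (\<Sum>s<k. \<Sum>r<k. \<Sum>l<n1. d' s * d r * (y s l * g r l j))"
      by (rule sum.swap)
    finally show ?thesis
      by (simp add: sum_distrib_left)
  qed
  have "(\<Sum>s<k. \<Sum>r<k. c' s * c r * (\<Sum>l<n1. y s l * g r l j))
      = (\<Sum>s<k. \<Sum>r<k. c' s * c r * (\<Sum>l<n1. y r l * g s l j))"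
    using symm j by (auto intro!: sum.cong)
  also have "\<dots> = (\<Sum>r<k. \<Sum>s<k. c r * c' s * (\<Sum>l<n1. y r l * g s l j))"
    by (subst sum.swap) (simp add: mult_ac)
  finally show ?thesis
    unfolding expand .
qed

lemma rigid_if_span_contains_alphas:
  assumes n: "n1 < n0" "1 \<le> n1"
    and c1: "\<And>l j. l < n1 \<Longrightarrow> j < n0 \<Longrightarrow> (\<Sum>r<k. c1 r * g r l j) = alpha1 l j"
    and c2: "\<And>l j. l < n1 \<Longrightarrow> j < n0 \<Longrightarrow> (\<Sum>r<k. c2 r * g r l j) = alpha2 n1 l j"
    and c3: "\<And>l j. l < n1 \<Longrightarrow> j < n0 \<Longrightarrow> (\<Sum>r<k. c3 r * g r l j) = alpha3 n1 l j"
  shows "rigid n1 n0 k g"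
  unfolding rigid_def
proof (intro allI impI)
  fix y r l
  assume symm: "\<forall>r<k. \<forall>s<k. \<forall>j<n0. (\<Sum>l<n1. y s l * g r l j) = (\<Sum>l<n1. y r l * g s l j)"
    and rl: "r < k" "l < n1"
  define V where "V c l = (\<Sum>r<k. c r * y r l)" for c l
  have bil: "(\<Sum>l<n1. V c' l * (\<Sum>r<k. c r * g r l m)) = (\<Sum>l<n1. V c l * (\<Sum>r<k. c' r * g r l m))"
    if "m < n0" for c c' m
    unfolding V_def using symm_lincomb[OF symm that] .
  have V1: "V c1 l' = 0" if "l' < n1" for l'
  proof (rule alpha_symm_rows_vanish[OF n _ _ _ that])
    fix m assume m: "m < n0"
    show "(\<Sum>l<n1. V c2 l * alpha1 l m) = (\<Sum>l<n1. V c1 l * alpha2 n1 l m)"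
      using bil[OF m, of c1 c2] c1 c2 m by simp
    show "(\<Sum>l<n1. V c3 l * alpha1 l m) = (\<Sum>l<n1. V c1 l * alpha3 n1 l m)"
      using bil[OF m, of c1 c3] c1 c3 m by simp
    show "(\<Sum>l<n1. V c3 l * alpha2 n1 l m) = (\<Sum>l<n1. V c2 l * alpha3 n1 l m)"
      using bil[OF m, of c2 c3] c2 c3 m by simp
  qed
  define d where "d s = (if s = r then 1 else 0 :: complex)" for s
  have Vd: "V d l' = y r l'" for l'
  proof -
    have "V d l' = (\<Sum>r'<k. if r' = r then y r' l' else 0)"
      unfolding V_def by (rule sum.cong) (auto simp: d_def)
    then show ?thesis
      using rl by simp
  qed
  have "l < n0"
    using rl n by simp
  then have "(\<Sum>l'<n1. V d l' * alpha1 l' l) = (\<Sum>l'<n1. V c1 l' * (\<Sum>r<k. d r * g r l' l))"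
    using bil[of l c1 d] c1 by simp
  also have "\<dots> = 0"
    using V1 by simp
  finally show "y r l = 0"
    using rl by (simp add: sum_mult_alpha1 Vd)
qed

lemma adj_mat_one: "adj_mat (1\<^sub>m k :: 'a :: comm_ring_1 mat) = 1\<^sub>m k"
proof -
  have "adj_mat (1\<^sub>m k :: 'a mat) = adj_mat (1\<^sub>m k) * 1\<^sub>m k"
    by (rule right_mult_one_mat[symmetric], rule adj_mat(1), rule one_carrier_mat)
  also have "\<dots> = det (1\<^sub>m k :: 'a mat) \<cdot>\<^sub>m 1\<^sub>m k"
    by (rule adj_mat(3), rule one_carrier_mat)
  also have "\<dots> = 1\<^sub>m k"
    by (intro eq_matI) auto
  finally show ?thesis .
qed

lemma is_basis_if_pivot_minor_one:
  assumes S: "S \<subseteq> {..<n1 * n0}" "card S = k"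
    and b: "\<And>r. r < k \<Longrightarrow> b r \<in> carrier_mat n1 n0"
    and normal: "pivot_minor n0 k S b = 1\<^sub>m k"
  shows "is_basis n1 n0 k b (span_mats n1 n0 k b)"
proof -
  let ?SL = "sorted_list_of_set S"
  have "c r = 0" if lc: "lincomb n1 n0 k c b = 0\<^sub>m n1 n0" and r: "r < k" for c r
  proof -
    let ?p = "?SL ! r"
    have "?p \<in> S"
      using r S finite_subset by (metis finite_lessThan nth_mem set_sorted_list_of_set
          length_sorted_list_of_set)
    then have p: "?p div n0 < n1" "?p mod n0 < n0"
      using S(1) div_mod_less_mult by blast+
    have "b s $$ (?p div n0, ?p mod n0) = (if s = r then 1 else 0)" if "s < k" for s
      using arg_cong[OF normal, of "\<lambda>M. M $$ (s, r)"] that r by (simp add: pivot_minor_def Let_def)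
    then have "lincomb n1 n0 k c b $$ (?p div n0, ?p mod n0) = (\<Sum>s<k. if s = r then c s else 0)"
      using p by (auto simp: if_distrib[of "\<lambda>x. _ * x"] cong: if_cong)
    then show ?thesis
      using lc p r by simp
  qed
  then show ?thesis
    using b by (simp add: is_basis_def)
qed

lemma cramer_coord_plucker_normal_form:
  assumes S: "S \<subseteq> {..<n1 * n0}" "card S = k" and normal: "pivot_minor n0 k S b = 1\<^sub>m k"
    and "r < k" "l < n1" "j < n0"
  shows "cramer_coord S r (l * n0 + j) (plucker k n1 n0 b) = b r $$ (l, j)"
proof -
  have "cramer_coord S r (l * n0 + j) (plucker k n1 n0 b) = (\<Sum>s<k. 1\<^sub>m k $$ (r, s) * b s $$ (l, j))"
    using cramer_coord_plucker[OF S _ assms(4) mult_add_less_mult[OF assms(5,6)]] normal assms(5,6)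
    by (simp add: adj_mat_one)
  also have "\<dots> = (\<Sum>s<k. (if r = s then 1 else 0) * b s $$ (l, j))"
    using assms(4) by (intro sum.cong) auto
  also have "\<dots> = b r $$ (l, j)"
    using assms(4) by (simp add: if_distrib[of "\<lambda>x. x * _"] cong: if_cong)
  finally show ?thesis .
qed

lemma symm_poly_nonzero_if_normal_form:
  assumes S: "S \<subseteq> {..<n1 * n0}" "card S = k" and n: "n1 < n0" "1 \<le> n1"
    and normal: "pivot_minor n0 k S b = 1\<^sub>m k"
    and real: "\<And>r l j. r < k \<Longrightarrow> l < n1 \<Longrightarrow> j < n0 \<Longrightarrow> b r $$ (l, j) \<in> \<real>"
    and c1: "\<And>l j. l < n1 \<Longrightarrow> j < n0 \<Longrightarrow> (\<Sum>r<k. c1 r * b r $$ (l, j)) = alpha1 l j"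
    and c2: "\<And>l j. l < n1 \<Longrightarrow> j < n0 \<Longrightarrow> (\<Sum>r<k. c2 r * b r $$ (l, j)) = alpha2 n1 l j"
    and c3: "\<And>l j. l < n1 \<Longrightarrow> j < n0 \<Longrightarrow> (\<Sum>r<k. c3 r * b r $$ (l, j)) = alpha3 n1 l j"
  shows "symm_poly n1 n0 k S (plucker k n1 n0 b) \<noteq> 0"
proof -
  have "symm_gram n1 n0 k (\<lambda>r l j. cramer_coord S r (l * n0 + j) (plucker k n1 n0 b))
      = symm_gram n1 n0 k (\<lambda>r l j. b r $$ (l, j))"
    by (intro symm_gram_cong cramer_coord_plucker_normal_form[OF S normal])
  moreover have "det (symm_gram n1 n0 k (\<lambda>r l j. b r $$ (l, j))) \<noteq> 0"
    by (intro det_symm_gram_nonzero_if_real real rigid_if_span_contains_alphas[OF n c1 c2 c3])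
  moreover have "plucker k n1 n0 b S = 1"
    using plucker_eq_det_pivot_minor[OF S] normal by simp
  ultimately show ?thesis
    by (simp add: symm_poly_def)
qed

definition alpha_pivot :: "nat \<Rightarrow> nat \<Rightarrow> nat \<Rightarrow> nat \<Rightarrow> nat \<Rightarrow> complex" where
  "alpha_pivot n1 n0 p =
     (if p = 0 then alpha1 else if p = (n1 - 1) * n0 + n1 then alpha2 n1 else alpha3 n1)"

lemma alpha_pivot_at_pivots:
  assumes n: "n1 < n0" "1 \<le> n1"
    and p: "p \<in> {0, 1, (n1 - 1) * n0 + n1}" and t: "t \<in> {0, 1, (n1 - 1) * n0 + n1}"
  shows "alpha_pivot n1 n0 p (t div n0) (t mod n0) = (if p = t then 1 else 0)"
proof -
  define p2 where "p2 = (n1 - 1) * n0 + n1"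
  have one: "1 div n0 = 0" "1 mod n0 = 1"
    using n by auto
  show ?thesis
  proof (cases "n1 = 1")
    case True
    then have "p2 = 1"
      by (simp add: p2_def)
    then show ?thesis
      using p t True one unfolding alpha_pivot_def p2_def[symmetric]
      by (elim insertE emptyE; simp add: alpha1_def alpha2_def)
  next
    case False
    have "p2 div n0 = n1 - 1" "p2 mod n0 = n1" "p2 \<noteq> 0" "p2 \<noteq> 1"
      using n False by (auto simp: p2_def)
    then show ?thesis
      using p t False n one unfolding alpha_pivot_def p2_def[symmetric]
      by (elim insertE emptyE; simp add: alpha1_def alpha2_def alpha3_def)
  qed
qed

lemma alpha_expansion:
  assumes n: "n1 < n0" "1 \<le> n1" and a: "a \<in> {alpha1, alpha2 n1, alpha3 n1}" and l: "l < n1"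
  shows "(\<Sum>p\<in>{0, 1, (n1 - 1) * n0 + n1}. a (p div n0) (p mod n0) * alpha_pivot n1 n0 p l j) = a l j"
proof -
  let ?P = "{0, 1, (n1 - 1) * n0 + n1}"
  have pivot_sum: "(\<Sum>p\<in>?P. alpha_pivot n1 n0 q (p div n0) (p mod n0) * alpha_pivot n1 n0 p l j)
      = alpha_pivot n1 n0 q l j" if q: "q \<in> ?P" for q
  proof -
    have "(\<Sum>p\<in>?P. alpha_pivot n1 n0 q (p div n0) (p mod n0) * alpha_pivot n1 n0 p l j)
        = (\<Sum>p\<in>?P. if q = p then alpha_pivot n1 n0 p l j else 0)"
      using alpha_pivot_at_pivots[OF n q] by (intro sum.cong) auto
    then show ?thesis
      using q by simp
  qed
  consider (pivot) q where "q \<in> ?P" "a = alpha_pivot n1 n0 q" | (zero) "n1 = 1" "a = alpha3 n1"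
  proof -
    have "(n1 - 1) * n0 + n1 \<noteq> 0" "n1 \<noteq> 1 \<Longrightarrow> 1 \<noteq> (n1 - 1) * n0 + n1"
      using n by auto
    then have "alpha1 = alpha_pivot n1 n0 0" "alpha2 n1 = alpha_pivot n1 n0 ((n1 - 1) * n0 + n1)"
      "n1 \<noteq> 1 \<Longrightarrow> alpha3 n1 = alpha_pivot n1 n0 1"
      by (auto simp: alpha_pivot_def)
    then show ?thesis
      using a that by blast
  qed
  then show ?thesis
  proof cases
    case (pivot q)
    then show ?thesis
      using pivot_sum[OF pivot(1)] by simp
  next
    case zero
    have "a (p div n0) j' = 0" if "p \<in> ?P" for p j'
      using that zero n by (auto simp: alpha3_def)
    moreover have "a l j = 0"
      using zero l by (simp add: alpha3_def)
    ultimately show ?thesis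
      by simp
  qed
qed

definition reduced_basis :: "nat \<Rightarrow> nat \<Rightarrow> nat set \<Rightarrow> (nat \<Rightarrow> nat \<Rightarrow> nat \<Rightarrow> complex) \<Rightarrow> nat \<Rightarrow> complex mat" where
  "reduced_basis n1 n0 T f p = mat n1 n0 (\<lambda>(l, j).
     if p \<in> T then (if l * n0 + j = p then 1 else 0) else if l * n0 + j \<in> T then 0 else f p l j)"

lemma pivot_minor_reduced_basis:
  assumes disj: "P \<inter> T = {}" and S: "P \<union> T \<subseteq> {..<n1 * n0}"
    and f: "\<And>p t. p \<in> P \<Longrightarrow> t \<in> P \<Longrightarrow> f p (t div n0) (t mod n0) = (if p = t then 1 else 0)"
  defines "SL \<equiv> sorted_list_of_set (P \<union> T)"
  shows "pivot_minor n0 (card (P \<union> T)) (P \<union> T) (\<lambda>r. reduced_basis n1 n0 T f (SL ! r))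
    = 1\<^sub>m (card (P \<union> T))"
proof (rule eq_matI)
  fix r c assume "r < dim_row (1\<^sub>m (card (P \<union> T)))" "c < dim_col (1\<^sub>m (card (P \<union> T)))"
  then have rc: "r < length SL" "c < length SL"
    by (simp_all add: SL_def)
  have "finite (P \<union> T)"
    using S finite_subset by blast
  then have SL: "distinct SL" "set SL = P \<union> T"
    by (simp_all add: SL_def)
  let ?p = "SL ! r" and ?t = "SL ! c"
  have "?p \<in> P \<union> T" "?t \<in> P \<union> T"
    using rc SL nth_mem by blast+
  then have "?t div n0 < n1" "?t mod n0 < n0"
    using S div_mod_less_mult by blast+
  then have "reduced_basis n1 n0 T f ?p $$ (?t div n0, ?t mod n0) = (if ?p = ?t then 1 else 0)"
    using \<open>?p \<in> P \<union> T\<close> \<open>?t \<in> P \<union> T\<close> disj f by (auto simp: reduced_basis_def)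
  then show "pivot_minor n0 (card (P \<union> T)) (P \<union> T) (\<lambda>r. reduced_basis n1 n0 T f (SL ! r)) $$ (r, c)
      = 1\<^sub>m (card (P \<union> T)) $$ (r, c)"
    using rc SL by (simp add: pivot_minor_def Let_def nth_eq_iff_index_eq SL_def)
qed (simp_all add: pivot_minor_def)

lemma lincomb_reduced_basis:
  assumes disj: "P \<inter> T = {}" and S: "P \<union> T \<subseteq> {..<n1 * n0}"
    and f: "\<And>l j. l < n1 \<Longrightarrow> j < n0 \<Longrightarrow> (\<Sum>p\<in>P. a (p div n0) (p mod n0) * f p l j) = a l j"
    and lj: "l < n1" "j < n0"
  defines "SL \<equiv> sorted_list_of_set (P \<union> T)"
  shows "(\<Sum>r<card (P \<union> T). a (SL ! r div n0) (SL ! r mod n0) * reduced_basis n1 n0 T f (SL ! r) $$ (l, j))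
    = a l j"
proof -
  let ?t = "l * n0 + j"
  let ?a = "\<lambda>p. a (p div n0) (p mod n0)"
  have fin: "finite P" "finite T"
    using S finite_subset by auto
  have "bij_betw ((!) SL) {..<card (P \<union> T)} (P \<union> T)"
    using fin by (intro bij_betw_nth) (simp_all add: SL_def)
  then have "(\<Sum>r<card (P \<union> T). ?a (SL ! r) * reduced_basis n1 n0 T f (SL ! r) $$ (l, j))
      = (\<Sum>p\<in>P \<union> T. ?a p * reduced_basis n1 n0 T f p $$ (l, j))"
    by (rule sum.reindex_bij_betw)
  also have "\<dots> = (\<Sum>p\<in>T. ?a p * reduced_basis n1 n0 T f p $$ (l, j))
                  + (\<Sum>p\<in>P. ?a p * reduced_basis n1 n0 T f p $$ (l, j))"
    using fin disj by (simp add: sum.union_disjoint add.commute)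
  also have "(\<Sum>p\<in>T. ?a p * reduced_basis n1 n0 T f p $$ (l, j)) = (\<Sum>p\<in>T. if ?t = p then ?a ?t else 0)"
    using lj by (intro sum.cong) (auto simp: reduced_basis_def)
  also have "(\<Sum>p\<in>P. ?a p * reduced_basis n1 n0 T f p $$ (l, j))
      = (\<Sum>p\<in>P. if ?t \<in> T then 0 else ?a p * f p l j)"
    using lj disj by (intro sum.cong) (auto simp: reduced_basis_def)
  finally show ?thesis
    using fin lj f[OF lj] by simp
qed

lemma alpha_pivot_real: "alpha_pivot n1 n0 p l j \<in> \<real>"
  by (simp add: alpha_pivot_def alpha1_def alpha2_def alpha3_def)

lemma exists_basis_symm_poly_nonzero:
  assumes n: "n1 < n0" "1 \<le> n1" and k: "card {0, 1, (n1 - 1) * n0 + n1} \<le> k" "k \<le> n1 * n0"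
  shows "\<exists>S b. S \<subseteq> {..<n1 * n0} \<and> card S = k \<and> is_basis n1 n0 k b (span_mats n1 n0 k b)
           \<and> symm_poly n1 n0 k S (plucker k n1 n0 b) \<noteq> 0"
proof -
  define P where "P = {0, 1, (n1 - 1) * n0 + n1}"
  have "(n1 - 1) * n0 + n1 < n1 * n0" "0 < n1 * n0" "1 < n1 * n0"
    using mult_add_less_mult[of "n1 - 1" n1 n1 n0] n less_le_trans[of 1 n0 "n1 * n0"] by auto
  then have P: "P \<subseteq> {..<n1 * n0}" "finite P"
    by (auto simp: P_def)
  have "k - card P \<le> card ({..<n1 * n0} - P)"
    using k P by (simp add: card_Diff_subset P_def)
  then obtain T where T: "T \<subseteq> {..<n1 * n0} - P" "card T = k - card P"
    by (meson obtain_subset_with_card_n)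
  have disj: "P \<inter> T = {}" and S: "P \<union> T \<subseteq> {..<n1 * n0}"
    using T P by auto
  have k_eq: "card (P \<union> T) = k"
    using P T k card_Un_disjoint[OF P(2) _ disj] finite_subset[OF T(1)] by (simp add: P_def)
  define SL where "SL = sorted_list_of_set (P \<union> T)"
  define b where "b r = reduced_basis n1 n0 T (alpha_pivot n1 n0) (SL ! r)" for r
  have "pivot_minor n0 (card (P \<union> T)) (P \<union> T) b = 1\<^sub>m (card (P \<union> T))"
    unfolding b_def SL_def
    by (rule pivot_minor_reduced_basis[OF disj S]) (use alpha_pivot_at_pivots[OF n] in \<open>simp add: P_def\<close>)
  then have normal: "pivot_minor n0 k (P \<union> T) b = 1\<^sub>m k"
    by (simp add: k_eq)
  have span: "(\<Sum>r<k. a (SL ! r div n0) (SL ! r mod n0) * b r $$ (l, j)) = a l j"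
    if "a \<in> {alpha1, alpha2 n1, alpha3 n1}" "l < n1" "j < n0" for a l j
    unfolding b_def SL_def k_eq[symmetric]
    by (rule lincomb_reduced_basis[OF disj S _ that(2,3)]) (use alpha_expansion[OF n that(1)] in \<open>simp add: P_def\<close>)
  have "b r \<in> carrier_mat n1 n0" for r
    by (simp add: b_def reduced_basis_def)
  then have "is_basis n1 n0 k b (span_mats n1 n0 k b)"
    by (intro is_basis_if_pivot_minor_one[OF S k_eq _ normal])
  moreover have "symm_poly n1 n0 k (P \<union> T) (plucker k n1 n0 b) \<noteq> 0"
  proof (rule symm_poly_nonzero_if_normal_form[OF S k_eq n normal])
    show "b r $$ (l, j) \<in> \<real>" if "l < n1" "j < n0" for r l j
      using that alpha_pivot_real by (simp add: b_def reduced_basis_def)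
  qed (rule span; simp)+
  ultimately show ?thesis
    using S k_eq by blast
qed

lemma nonempty_zariski_open_symm_trivial:
  assumes "n1 < n0" "1 \<le> n1" and "card {0, 1, (n1 - 1) * n0 + n1} \<le> k" "k \<le> n1 * n0"
  shows "\<exists>U. zariski_open_grass k n1 n0 U \<and> U \<noteq> {} \<and> (\<forall>E\<in>U. symm_trivial E n2 n1)"
proof -
  define P where "P = {symm_poly n1 n0 k S | S. S \<subseteq> {..<n1 * n0} \<and> card S = k}"
  define U where "U = {E \<in> grassmannian k n1 n0.
    \<exists>b f. is_basis n1 n0 k b E \<and> f \<in> P \<and> f (plucker k n1 n0 b) \<noteq> 0}"
  have "zariski_open_grass k n1 n0 U"
    unfolding zariski_open_grass_def
  proof (intro exI conjI)
    show "\<forall>f\<in>P. homogeneous_poly f"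
      using homogeneous_symm_poly by (auto simp: P_def)
  qed (simp add: U_def)
  moreover have "U \<noteq> {}"
  proof -
    obtain S b where S: "S \<subseteq> {..<n1 * n0}" "card S = k"
      and b: "is_basis n1 n0 k b (span_mats n1 n0 k b)" "symm_poly n1 n0 k S (plucker k n1 n0 b) \<noteq> 0"
      using exists_basis_symm_poly_nonzero[OF assms] by blast
    have "symm_poly n1 n0 k S \<in> P"
      using S by (auto simp: P_def)
    with b have "span_mats n1 n0 k b \<in> U"
      unfolding U_def grassmannian_def by blast
    then show ?thesis
      by blast
  qed
  moreover have "symm_trivial E n2 n1" if E: "E \<in> U" for E
  proof -
    obtain b S where "is_basis n1 n0 k b E" "S \<subseteq> {..<n1 * n0}" "card S = k"
      "symm_poly n1 n0 k S (plucker k n1 n0 b) \<noteq> 0"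
      using E unfolding U_def P_def by blast
    then show ?thesis
      using symm_trivial_if_symm_poly_nonzero by blast
  qed
  ultimately show ?thesis
    by blast
qed

theorem mainTheorem3:
  fixes n0 n1 n2 :: nat
  assumes "n0 > n1" and "n1 \<ge> 1"
  shows "(n1 = 1 \<longrightarrow> (\<forall>k. 2 \<le> k \<and> k \<le> n1 * n0 \<longrightarrow>
            (\<exists>U. zariski_open_grass k n1 n0 U \<and> U \<noteq> {} \<and>
                 (\<forall>E\<in>U. symm_trivial E n2 n1)))) \<and>
         (n1 > 1 \<longrightarrow> (\<forall>k. 3 \<le> k \<and> k \<le> n1 * n0 \<longrightarrow>
            (\<exists>U. zariski_open_grass k n1 n0 U \<and> U \<noteq> {} \<and>
                 (\<forall>E\<in>U. symm_trivial E n2 n1))))"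
proof -
  have "card {0, 1, (n1 - 1) * n0 + n1} \<le> 3"
    by (simp add: card_insert_if)
  moreover have "card {0, 1, (n1 - 1) * n0 + n1} = 2" if "n1 = 1"
    using that by simp
  ultimately show ?thesis
    using nonempty_zariski_open_symm_trivial[OF assms] by auto
qed

end
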